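(* Let $m$ be an odd positive integer and let $a,d_1,d_2\in\mathbb{Z}/m\mathbb{Z}$ be such that $d_1$, $d_2$ and $d_2-d_1$ are all invertible. Then the arithmetic triangle $\mathrm{AT}(a,d_1,d_2,n)$ is balanced for all non-negative integers $n\equiv0$ or $n\equiv-1\pmod m$.
   Context: The arithmetic triangle $\mathrm{AT}(a,d_1,d_2,n)$ is the family $(a+id_2+jd_1)_{(i,j)\in\mathbb{N}^2,\,i+j<n}$ of elements of $\mathbb{Z}/m\mathbb{Z}$. It is balanced if every element of $\mathbb{Z}/m\mathbb{Z}$ occurs the same number of times in it. *)

theory Defs
  imports Main "HOL-Number_Theory.Cong"
begin

text \<open>Elements of Z/mZ are represented by integers modulo m.
  The arithmetic triangle AT(a,d1,d2,n) is the family indexed by pairs (i,j) of naturals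
  with i + j < n, with value a + i*d2 + j*d1 (mod m).\<close>

definition AT_mult :: "nat \<Rightarrow> int \<Rightarrow> int \<Rightarrow> int \<Rightarrow> nat \<Rightarrow> int \<Rightarrow> nat" where
  "AT_mult m a d1 d2 n x =
     card {(i, j). (i::nat) + (j::nat) < n \<and> [a + int i * d2 + int j * d1 = x] (mod int m)}"

definition AT_balanced :: "nat \<Rightarrow> int \<Rightarrow> int \<Rightarrow> int \<Rightarrow> nat \<Rightarrow> bool" where
  "AT_balanced m a d1 d2 n \<longleftrightarrow>
     (\<forall>x\<in>{0..<int m}. \<forall>y\<in>{0..<int m}. AT_mult m a d1 d2 n x = AT_mult m a d1 d2 n y)"

end

theory Submission
  imports Defs
begin

text \<open>Write \<open>D = d1 - d2\<close> and \<open>M x\<close> for the multiplicity of \<open>x\<close> in the triangle.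
  Peeling off the edge \<open>j = 0\<close> of the triangle of values congruent to \<open>x + D\<close>, and the edge
  \<open>i = 0\<close> of the triangle of values congruent to \<open>x\<close>, leaves the same set of inner points,
  because moving from \<open>(i + 1, j)\<close> to \<open>(i, j + 1)\<close> adds \<open>D\<close> to the value. Hence
  \<open>M (x + D) - M x\<close> is the difference of the multiplicities of \<open>x + D\<close> and \<open>x\<close> in two arithmetic
  progressions of length \<open>n\<close> with invertible differences \<open>d2\<close> and \<open>d1\<close>. When \<open>m\<close> divides \<open>n\<close>
  both progressions run through every residue \<open>n / m\<close> times; when \<open>m\<close> divides \<open>n + 1\<close>, the
  same holds after appending one term to each, and the appended terms \<open>a + n d1\<close> and
  \<open>a + n d2\<close> differ by \<open>n D \<equiv> -D\<close>, so the first hits \<open>x\<close> exactly when the second hits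
  \<open>x + D\<close>. So \<open>M\<close> is invariant under translation by the invertible \<open>D\<close>, hence constant.\<close>

definition AP_mult :: "nat \<Rightarrow> int \<Rightarrow> int \<Rightarrow> nat \<Rightarrow> int \<Rightarrow> nat" where
  "AP_mult m b d n y = card {j. j < n \<and> [b + int j * d = y] (mod int m)}"

lemma AP_mult_Suc:
  "AP_mult m b d (Suc n) y
     = AP_mult m b d n y + (if [b + int n * d = y] (mod int m) then 1 else 0)"
proof -
  have "{j. j < Suc n \<and> [b + int j * d = y] (mod int m)}
      = {j. j < n \<and> [b + int j * d = y] (mod int m)}
        \<union> (if [b + int n * d = y] (mod int m) then {n} else {})"
    by (auto simp: less_Suc_eq)
  then show ?thesis
    unfolding AP_mult_def by auto
qed

lemma AP_mult_add:
  "AP_mult m b d (n + k) y = AP_mult m b d n y + AP_mult m (b + int n * d) d k y"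
proof (induction k)
  case 0
  then show ?case by (simp add: AP_mult_def)
next
  case (Suc k)
  have "b + int (n + k) * d = b + int n * d + int k * d"
    by (simp add: algebra_simps)
  then show ?case
    by (simp only: add_Suc_right AP_mult_Suc Suc.IH add.assoc)
qed

lemma cong_solve_progression:
  assumes "m > 0" and "coprime d (int m)"
  obtains t where "t < m" and "[b + int t * d = y] (mod int m)"
proof -
  obtain e where e: "[d * e = y - b] (mod int m)"
    using cong_solve_dvd_int[of d "int m" "y - b"] assms(2) by auto
  define t where "t = nat (e mod int m)"
  have "[int t = e] (mod int m)"
    using assms(1) by (simp add: t_def cong_def)
  then have "[int t * d = d * e] (mod int m)"
    by (metis cong_scalar_right mult.commute)
  then have "[int t * d = y - b] (mod int m)"
    using e by (rule cong_trans)
  then have "[b + int t * d = b + (y - b)] (mod int m)"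
    by (rule cong_add_lcancel[THEN iffD2])
  moreover have "t < m"
    using assms(1) by (simp add: t_def nat_less_iff)
  ultimately show ?thesis
    using that by simp
qed

lemma AP_mult_period:
  assumes "m > 0" and "coprime d (int m)"
  shows "AP_mult m b d m y = 1"
proof -
  obtain t0 where t0: "t0 < m" "[b + int t0 * d = y] (mod int m)"
    using cong_solve_progression[OF assms] .
  have "t = t0" if "t < m" and "[b + int t * d = y] (mod int m)" for t
  proof -
    have "[b + int t * d = b + int t0 * d] (mod int m)"
      using that(2) t0(2) by (meson cong_sym cong_trans)
    then have "[int t * d = int t0 * d] (mod int m)"
      by (rule cong_add_lcancel[THEN iffD1])
    then have "[t = t0] (mod m)"
      using cong_mult_rcancel assms(2) by (blast intro: cong_int_iff[THEN iffD1])
    then show "t = t0"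
      using that(1) t0(1) cong_less_modulus_unique_nat by blast
  qed
  then have "{t. t < m \<and> [b + int t * d = y] (mod int m)} = {t0}"
    using t0 by blast
  then show ?thesis
    by (simp add: AP_mult_def)
qed

lemma AP_mult_full_periods:
  assumes "m > 0" and "coprime d (int m)"
  shows "AP_mult m b d (k * m) y = k"
proof (induction k)
  case 0
  then show ?case by (simp add: AP_mult_def)
next
  case (Suc k)
  then show ?case
    using AP_mult_add[of m b d "k * m" m y] AP_mult_period[OF assms]
    by (simp add: add.commute)
qed

lemma AP_mult_d1_d2_eq:
  assumes "m > 0" and "coprime d1 (int m)" and "coprime d2 (int m)"
    and "[int n = 0] (mod int m) \<or> [int n = -1] (mod int m)"
  shows "AP_mult m a d1 n x = AP_mult m a d2 n (x + (d1 - d2))"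
  using assms(4)
proof
  assume "[int n = 0] (mod int m)"
  then obtain k where "n = k * m"
    by (metis cong_0_iff dvd_def mult.commute of_nat_dvd_iff)
  then show ?thesis
    using AP_mult_full_periods[OF assms(1,2)] AP_mult_full_periods[OF assms(1,3)] by simp
next
  assume "[int n = -1] (mod int m)"
  then have dvd: "int m dvd int n + 1"
    by (simp add: cong_iff_dvd_diff)
  then obtain k where k: "Suc n = k * m"
    by (metis dvd_def mult.commute of_nat_Suc add.commute of_nat_dvd_iff)
  have "a + int n * d1 - x = (int n + 1) * (d1 - d2) + (a + int n * d2 - (x + (d1 - d2)))"
    by (simp add: algebra_simps)
  then have last: "[a + int n * d1 = x] (mod int m)
      \<longleftrightarrow> [a + int n * d2 = x + (d1 - d2)] (mod int m)"
    unfolding cong_iff_dvd_diff by (metis dvd dvd_add_right_iff dvd_mult2)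
  show ?thesis
    using AP_mult_full_periods[OF assms(1,2), of a k x]
      AP_mult_full_periods[OF assms(1,3), of a k "x + (d1 - d2)"]
      AP_mult_Suc[of m a d1 n x] AP_mult_Suc[of m a d2 n "x + (d1 - d2)"] k last
    by (simp split: if_splits)
qed

lemma card_triangle_Suc_fst:
  "card {(i, j). i + j < Suc n \<and> P i j}
     = card {j. j < Suc n \<and> P 0 j} + card {(i, j). i + j < n \<and> P (Suc i) j}"
proof -
  have split: "{(i, j). i + j < Suc n \<and> P i j}
      = (\<lambda>j. (0, j)) ` {j. j < Suc n \<and> P 0 j}
        \<union> (\<lambda>(i, j). (Suc i, j)) ` {(i, j). i + j < n \<and> P (Suc i) j}"
  proof (rule set_eqI, clarify)
    fix i j
    show "(i, j) \<in> {(i, j). i + j < Suc n \<and> P i j}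
        \<longleftrightarrow> (i, j) \<in> (\<lambda>j. (0, j)) ` {j. j < Suc n \<and> P 0 j}
          \<union> (\<lambda>(i, j). (Suc i, j)) ` {(i, j). i + j < n \<and> P (Suc i) j}"
      by (cases i) auto
  qed
  have "finite {(i, j). i + j < n \<and> P (Suc i) j}"
    by (rule finite_subset[of _ "{..<n} \<times> {..<n}"]) auto
  then show ?thesis
    unfolding split by (subst card_Un_disjoint) (auto simp: card_image inj_on_def)
qed

lemma card_triangle_Suc_snd:
  "card {(i, j). i + j < Suc n \<and> P i j}
     = card {i. i < Suc n \<and> P i 0} + card {(i, j). i + j < n \<and> P i (Suc j)}"
proof -
  have swap: "card {(i, j). i + j < k \<and> Q j i} = card {(i, j). i + j < k \<and> Q i j}"
    for k and Q :: "nat \<Rightarrow> nat \<Rightarrow> bool"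
  proof -
    have "{(i, j). i + j < k \<and> Q j i} = prod.swap ` {(i, j). i + j < k \<and> Q i j}"
      by auto
    then show ?thesis
      by (simp add: card_image)
  qed
  show ?thesis
    using card_triangle_Suc_fst[of n "\<lambda>i j. P j i"]
      swap[of "Suc n" P] swap[of n "\<lambda>i j. P i (Suc j)"]
    by simp
qed

lemma AT_mult_shift:
  "AT_mult m a d1 d2 n (x + (d1 - d2)) + AP_mult m a d1 n x
     = AT_mult m a d1 d2 n x + AP_mult m a d2 n (x + (d1 - d2))"
proof (cases n)
  case 0
  then show ?thesis by (simp add: AT_mult_def AP_mult_def)
next
  case (Suc k)
  have inner: "[a + int i * d2 + int (Suc j) * d1 = x + (d1 - d2)] (mod int m)
      \<longleftrightarrow> [a + int (Suc i) * d2 + int j * d1 = x] (mod int m)" for i j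
  proof -
    have shifted: "a + int i * d2 + int (Suc j) * d1
        = (a + int (Suc i) * d2 + int j * d1) + (d1 - d2)"
      by (simp add: algebra_simps)
    show ?thesis
      unfolding shifted by (rule cong_add_rcancel)
  qed
  show ?thesis
    unfolding AT_mult_def AP_mult_def Suc
    using card_triangle_Suc_fst[of k "\<lambda>i j. [a + int i * d2 + int j * d1 = x] (mod int m)"]
      card_triangle_Suc_snd[of k "\<lambda>i j. [a + int i * d2 + int j * d1 = x + (d1 - d2)] (mod int m)"]
    by (simp only: inner) simp
qed

lemma AT_mult_cong:
  assumes "[x = y] (mod int m)"
  shows "AT_mult m a d1 d2 n x = AT_mult m a d1 d2 n y"
  unfolding AT_mult_def using assms by (metis cong_sym cong_trans)

lemma periodic_shift_int:
  fixes f :: "int \<Rightarrow> 'a"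
  assumes "\<And>x. f (x + p) = f x"
  shows "f (x + int t * p) = f x"
proof (induction t)
  case 0
  then show ?case by simp
next
  case (Suc t)
  then show ?case
    using assms[of "x + int t * p"] by (simp add: algebra_simps)
qed

theorem theorem14:
  fixes m :: nat and a d1 d2 :: int and n :: nat
  assumes "odd m" and "m > 0"
    and "coprime d1 (int m)" and "coprime d2 (int m)" and "coprime (d2 - d1) (int m)"
    and "[int n = 0] (mod int m) \<or> [int n = -1] (mod int m)"
  shows "AT_balanced m a d1 d2 n"
proof -
  let ?M = "AT_mult m a d1 d2 n"
  define D where "D = d1 - d2"
  have D_coprime: "coprime D (int m)"
    using assms(5) by (metis D_def coprime_minus_left_iff minus_diff_eq)
  have "?M (x + D) = ?M x" for x
    using AT_mult_shift[of m a d1 d2 n x] AP_mult_d1_d2_eq[OF assms(2,3,4,6), of a x]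
    by (simp add: D_def)
  then have translate: "?M (x + int t * D) = ?M x" for x t
    by (rule periodic_shift_int)
  show ?thesis
    unfolding AT_balanced_def
  proof (intro ballI)
    fix x y
    obtain t where "[x + int t * D = y] (mod int m)"
      using cong_solve_progression[OF assms(2) D_coprime] .
    then show "?M x = ?M y"
      using translate AT_mult_cong by metis
  qed
qed

end
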